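(* Let $p,p'\ge1$ with $|p-p'|=1$, $p_{\min}=\min\{p,p'\}$, and let $S=\alpha_{(p,p')}(S')$ where $S'$ is a Sturmian word (so $a^{p_{\min}}b$ is the short block of $S$). If $X$ is a palindrome that is maximal in $S$ and $|X|_b>0$, then $X=Uba^{p_{\min}}=a^{p_{\min}}bV$ for some words $U,V$.
   Context: $\alpha_{(p,p')}$ is the morphism $a\mapsto a^pb$, $b\mapsto a^{p'}b$. A Sturmian word is a right-infinite aperiodic word over $\{a,b\}$ with exactly $n+1$ factors of each length $n$. $|X|_b$ is the number of occurrences of $b$ in $X$. A palindrome $X$ is maximal in $S$ if $lXl'$ is a factor of $S$ for some letters $l\neq l'$. *)

theory Defs
  imports Main
begin

datatype letter = a | b

definition factors_of_length :: "(nat \<Rightarrow> letter) \<Rightarrow> nat \<Rightarrow> letter list set" where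
  "factors_of_length w n = {map w [i..<i+n] | i. True}"

definition is_factor :: "letter list \<Rightarrow> (nat \<Rightarrow> letter) \<Rightarrow> bool" where
  "is_factor u w \<longleftrightarrow> (\<exists>i. u = map w [i..<i + length u])"

definition eventually_periodic :: "(nat \<Rightarrow> letter) \<Rightarrow> bool" where
  "eventually_periodic w \<longleftrightarrow> (\<exists>q>0. \<exists>N. \<forall>i\<ge>N. w (i + q) = w i)"

definition sturmian :: "(nat \<Rightarrow> letter) \<Rightarrow> bool" where
  "sturmian w \<longleftrightarrow> \<not> eventually_periodic w \<and>
     (\<forall>n. finite (factors_of_length w n) \<and> card (factors_of_length w n) = n + 1)"

fun alpha_letter :: "nat \<Rightarrow> nat \<Rightarrow> letter \<Rightarrow> letter list" where
  "alpha_letter p p' a = replicate p a @ [b]"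
| "alpha_letter p p' b = replicate p' a @ [b]"

definition alpha :: "nat \<Rightarrow> nat \<Rightarrow> letter list \<Rightarrow> letter list" where
  "alpha p p' u = concat (map (alpha_letter p p') u)"

text \<open>Image of an infinite word: since every letter image is nonempty, the image of
  the prefix of length k+1 has length > k, and all these images are prefixes of each other.\<close>
definition alpha_inf :: "nat \<Rightarrow> nat \<Rightarrow> (nat \<Rightarrow> letter) \<Rightarrow> (nat \<Rightarrow> letter)" where
  "alpha_inf p p' w = (\<lambda>k. alpha p p' (map w [0..<Suc k]) ! k)"

definition palindrome :: "letter list \<Rightarrow> bool" where
  "palindrome x \<longleftrightarrow> rev x = x"

definition maximal_palindrome :: "letter list \<Rightarrow> (nat \<Rightarrow> letter) \<Rightarrow> bool" where
  "maximal_palindrome x w \<longleftrightarrow> palindrome x \<and>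
     (\<exists>l l'. l \<noteq> l' \<and> is_factor (l # x @ [l']) w)"

definition count_b :: "letter list \<Rightarrow> nat" where
  "count_b x = length (filter (\<lambda>c. c = b) x)"

end

theory Submission
  imports Defs "HOL-Library.Sublist"
begin

text \<open>Let \<open>m = min p p'\<close>, so that \<open>max p p' = m + 1\<close>. In the image \<open>S\<close> of any word
  under \<open>\<alpha>\<close>, consecutive \<open>b\<close>'s are separated by \<open>p\<close> or \<open>p'\<close> letters \<open>a\<close>: hence
  \<open>b a\<^sup>j b\<close> is not a factor for \<open>j < m\<close>, and \<open>a\<^sup>j\<close> is not a factor for \<open>j > m + 1\<close>.
  Write \<open>X = a\<^sup>k b Y\<close>; being a palindrome, also \<open>X = rev Y b a\<^sup>k\<close>. Of the letters
  \<open>l \<noteq> l'\<close> around \<open>X\<close> one is \<open>a\<close> and the other \<open>b\<close>, so one of the two runs \<open>a\<^sup>k\<close>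
  is enclosed by \<open>b\<close>'s, giving \<open>m \<le> k\<close>, and the other is extended by an \<open>a\<close>,
  giving \<open>k + 1 \<le> m + 1\<close>.\<close>

lemma alpha_Nil [simp]: "alpha p p' [] = []"
  and alpha_Cons [simp]: "alpha p p' (c # u) = alpha_letter p p' c @ alpha p p' u"
  and alpha_append [simp]: "alpha p p' (u @ v) = alpha p p' u @ alpha p p' v"
  by (simp_all add: alpha_def)

lemma alpha_letter_cases:
  obtains q where "alpha_letter p p' c = replicate q a @ [b]" and "q = p \<or> q = p'"
  by (cases c) auto

lemma length_le_length_alpha: "length u \<le> length (alpha p p' u)"
proof (induction u)
  case (Cons c u)
  then show ?case by (cases c rule: alpha_letter_cases[of p p']) auto
qed simp

lemma prefix_alpha_upt:
  assumes "n \<le> N"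
  shows "prefix (alpha p p' (map w [0..<n])) (alpha p p' (map w [0..<N]))"
proof -
  have "[0..<N] = [0..<n] @ [n..<N]"
    using assms upt_add_eq_append[of 0 n "N - n"] by simp
  then show ?thesis by simp
qed

lemma alpha_inf_eq_nth:
  assumes "k < n"
  shows "alpha_inf p p' w k = alpha p p' (map w [0..<n]) ! k"
proof -
  let ?L = "alpha p p' (map w [0..<Suc k])"
  have "k < length ?L"
    using length_le_length_alpha[of "map w [0..<Suc k]" p p'] by (simp del: upt_Suc)
  moreover obtain zs where "alpha p p' (map w [0..<n]) = ?L @ zs"
    using prefix_alpha_upt[of "Suc k" n p p' w] assms by (auto simp: prefix_def simp del: upt_Suc)
  ultimately show ?thesis by (simp add: alpha_inf_def nth_append del: upt_Suc)
qed

lemma is_factor_alpha_inf_imp_sublist: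
  assumes "is_factor u (alpha_inf p p' w)"
  obtains n where "sublist u (alpha p p' (map w [0..<n]))"
proof -
  obtain i where u: "u = map (alpha_inf p p' w) [i..<i + length u]"
    using assms by (auto simp: is_factor_def)
  define L where "L = alpha p p' (map w [0..<i + length u])"
  have "i + length u \<le> length L"
    using length_le_length_alpha[of "map w [0..<i + length u]" p p'] by (simp add: L_def)
  then have "map (alpha_inf p p' w) [i..<i + length u] = take (length u) (drop i L)"
    by (intro map_upt_eqI) (auto simp: L_def alpha_inf_eq_nth[of _ "i + length u"])
  then have "sublist u L"
    using u sublist_order.order_trans[OF sublist_take sublist_drop] by metis
  then show thesis using that L_def by blast
qed

lemma is_factor_sublist:
  assumes "sublist u v" and "is_factor v w"
  shows "is_factor u w"
proof -
  obtain ps ss where v: "v = ps @ u @ ss"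
    using assms(1) by (auto simp: sublist_def)
  obtain i where i: "v = map w [i..<i + length v]"
    using assms(2) by (auto simp: is_factor_def)
  have "map w [i + length ps..<i + length ps + length u] = u"
  proof (rule map_upt_eqI)
    fix j assume "j < length u"
    then have "u ! j = v ! (length ps + j)"
      using v by (simp add: nth_append)
    also have "\<dots> = w (i + length ps + j)"
      using \<open>j < length u\<close> v by (subst i) (simp add: add.assoc)
    finally show "u ! j = w (i + length ps + j)" .
  qed simp
  then show ?thesis by (metis is_factor_def)
qed

lemma sublist_append_Cons_avoiding:
  assumes "sublist x (ys @ y # zs)" and "y \<notin> set x"
  shows "sublist x ys \<or> sublist x zs"
proof -
  have "x = [] \<or> sublist x ys \<or> sublist x zs \<or> suffix x ys"
    using assms by (auto simp: sublist_append sublist_Cons_right prefix_Cons)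
  then show ?thesis by auto
qed

lemma sublist_b_Cons_replicate_a:
  assumes "sublist (b # v) (replicate q a @ zs)"
  shows "sublist (b # v) zs"
  using assms by (induction q) (auto simp: sublist_Cons_right)

lemma not_sublist_long_a_run_alpha:
  assumes "max p p' < j"
  shows "\<not> sublist (replicate j a) (alpha p p' u)"
proof (induction u)
  case (Cons c u)
  obtain q where c: "alpha_letter p p' c = replicate q a @ [b]" and q: "q = p \<or> q = p'"
    by (rule alpha_letter_cases)
  have "\<not> sublist (replicate j a) (replicate q a)"
    using sublist_length_le assms q by fastforce
  with Cons.IH show ?case
    using sublist_append_Cons_avoiding[of "replicate j a" "replicate q a" b] c by auto
qed (use assms in simp)

lemma not_prefix_short_a_run_alpha:
  assumes "j < min p p'"
  shows "\<not> prefix (replicate j a @ [b]) (alpha p p' u)"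
proof (cases u)
  case (Cons c u')
  obtain q where "alpha_letter p p' c = replicate q a @ [b]" and "q = p \<or> q = p'"
    by (rule alpha_letter_cases)
  with assms have "alpha p p' u = replicate j a @ replicate (q - j) a @ b # alpha p p' u'"
    and "0 < q - j"
    using Cons by (auto simp flip: replicate_add)
  then show ?thesis by (cases "q - j") auto
qed simp

lemma not_sublist_short_b_gap_alpha:
  assumes "j < min p p'"
  shows "\<not> sublist (b # replicate j a @ [b]) (alpha p p' u)"
proof (induction u)
  case (Cons c u)
  obtain q where "alpha_letter p p' c = replicate q a @ [b]"
    by (rule alpha_letter_cases)
  then have "sublist (b # replicate j a @ [b]) (alpha p p' (c # u)) \<Longrightarrow>
      sublist (b # replicate j a @ [b]) (b # alpha p p' u)"
    using sublist_b_Cons_replicate_a by auto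
  then show ?case
    using Cons.IH not_prefix_short_a_run_alpha[OF assms] by (auto simp: sublist_Cons_right)
qed simp

lemma alpha_inf_no_long_a_run:
  "max p p' < j \<Longrightarrow> \<not> is_factor (replicate j a) (alpha_inf p p' w)"
  by (metis is_factor_alpha_inf_imp_sublist not_sublist_long_a_run_alpha)

lemma alpha_inf_no_short_b_gap:
  "j < min p p' \<Longrightarrow> \<not> is_factor (b # replicate j a @ [b]) (alpha_inf p p' w)"
  by (metis is_factor_alpha_inf_imp_sublist not_sublist_short_b_gap_alpha)

lemma palindrome_split_first_b:
  assumes "rev X = X" and "b \<in> set X"
  obtains k Y where "X = replicate k a @ b # Y" and "X = rev Y @ b # replicate k a"
proof -
  obtain ys Y where X: "X = ys @ b # Y" and "b \<notin> set ys"
    using split_list_first[OF assms(2)] by blast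
  then have "\<forall>c \<in> set ys. c = a" by (metis letter.exhaust)
  then have "X = replicate (length ys) a @ b # Y"
    using X by (metis replicate_length_same)
  moreover from this have "X = rev Y @ b # replicate (length ys) a"
    using assms(1) by (metis append.assoc append_Cons append_Nil rev.simps(2) rev_append rev_replicate)
  ultimately show thesis using that by blast
qed

lemma is_factor_b_gap_and_a_run:
  assumes "l \<noteq> l'"
    and "is_factor (l # replicate k a @ [b]) w" and "is_factor (b # replicate k a @ [l']) w"
  shows "is_factor (b # replicate k a @ [b]) w" and "is_factor (replicate (Suc k) a) w"
proof -
  have "sublist (replicate (Suc k) a) (a # replicate k a @ [b])"
    by (intro prefix_imp_sublist) simp
  moreover have "sublist (replicate (Suc k) a) (b # replicate k a @ [a])"
    by (simp add: sublist_Cons_right replicate_append_same[symmetric])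
  moreover have "l = a \<and> l' = b \<or> l = b \<and> l' = a"
    using assms(1) by (cases l; cases l') auto
  ultimately show "is_factor (b # replicate k a @ [b]) w" and "is_factor (replicate (Suc k) a) w"
    using assms(2,3) is_factor_sublist by blast+
qed

theorem mainTheorem6:
  fixes p p' :: nat and S' :: "nat \<Rightarrow> letter" and X :: "letter list"
  assumes "p \<ge> 1" and "p' \<ge> 1" and "p = p' + 1 \<or> p' = p + 1"
    and "sturmian S'"
    and "maximal_palindrome X (alpha_inf p p' S')"
    and "count_b X > 0"
  shows "\<exists>U V. X = U @ [b] @ replicate (min p p') a
              \<and> X = replicate (min p p') a @ [b] @ V"
proof -
  let ?S = "alpha_inf p p' S'"
  obtain l l' where "l \<noteq> l'" and factor: "is_factor (l # X @ [l']) ?S" and "rev X = X"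
    using assms(5) by (auto simp: maximal_palindrome_def palindrome_def)
  have "b \<in> set X"
    using assms(6) by (auto simp: count_b_def filter_empty_conv)
  then obtain k Y where X: "X = replicate k a @ b # Y" and X': "X = rev Y @ b # replicate k a"
    using \<open>rev X = X\<close> palindrome_split_first_b by blast
  have "sublist (l # replicate k a @ [b]) (l # X @ [l'])"
    using X by (intro prefix_imp_sublist) simp
  moreover have "sublist (b # replicate k a @ [l']) (l # X @ [l'])"
    using X' by (intro suffix_imp_sublist) (simp add: suffix_def)
  ultimately have "is_factor (l # replicate k a @ [b]) ?S" and "is_factor (b # replicate k a @ [l']) ?S"
    using is_factor_sublist[OF _ factor] by blast+
  then have "is_factor (b # replicate k a @ [b]) ?S" and "is_factor (replicate (Suc k) a) ?S"
    using is_factor_b_gap_and_a_run[OF \<open>l \<noteq> l'\<close>] by blast+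
  then have "min p p' \<le> k" and "Suc k \<le> max p p'"
    using alpha_inf_no_short_b_gap alpha_inf_no_long_a_run not_less by blast+
  with assms(3) have "k = min p p'"
    by linarith
  then show ?thesis using X X' by (metis append_Cons append_Nil)
qed

end
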